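(* (SEM-ME) Let $M$ be a canonical linear SEM-ME satisfying SEM-ME faithfulness part (a). Then there is a total order on the ancestral ordered groups of $M$ such that, for every model $M'$ in the AOG equivalence class of $M$, every edge of $M'$ between variables lying in two different ancestral ordered groups goes from the earlier group to the later group. (SEM-UR) The analogous statement holds for a linear SEM-UR $M$ satisfying SEM-UR faithfulness part (a) and any $M'$ in its AOG equivalence class.
   Context: Linear SEM-ME (canonical form): underlying variables $V_1,\dots,V_p$ partitioned into unobserved $\mathcal Z$ and observed $\mathcal Y$, $V_i=\sum_{V_j\in Pa(V_i)}c_{ij}V_j+N_{V_i}$ over a DAG (edge $V_j\to V_i$ iff $c_{ij}\ne0$), measurements $U_i=Z_i+N_{U_i}$, independent noises. A u-leaf node is a $Z$-variable with no children; all others are nu-leaf nodes; in canonical form u-leaf nodes have zero noise and nu-leaf nodes nondegenerate noise. Since observedness of non-leaf variables does not affect the mixing matrix, a model is specified by its weighted DAG on the underlying variables and its set of u-leaf nodes. The mixing matrix $\mathbf W^{ME}$ has rows indexed by underlying variables, columns by noise terms $N_{V'}$ of nu-leaf nodes, $(V,N_{V'})$ entry = total causal effect of $V'$ on $V$ (sum over directed paths of products of weights; $1$ if $V=V'$). Linear SEM-UR: $H=N_H$, $X=\mathbf BH+\mathbf AX+N_X$ with $\mathbf A$ strictly lower triangular, independent noises; diagram has edges $H_i\to X_j$ iff $b_{ji}\neq0$ and $X_k\to X_j$ iff $a_{jk}\ne 0$; mixing matrix $\mathbf W^{UR}=[(\mathbf I-\mathbf A)^{-1}\mathbf B\;\;(\mathbf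 I-\mathbf A)^{-1}]$ with rows indexed by observed variables and columns by noise terms. $Pa,Ch,An,De$ denote parents, children, ancestors, descendants, with $An(V),De(V)$ excluding $V$. Faithfulness part (a): SEM-ME: the total causal effect of any underlying variable on any of its descendants is nonzero. SEM-UR: the total causal effect of any observed or latent variable on any of its descendants is nonzero. Ancestral ordered grouping (AOG). SEM-ME: each nu-leaf node is put in its own group; each u-leaf node $Z_j$ is put in the group of a parent $V_i$ if $Z_j$ has no other parents or all other parents of $Z_j$ are ancestors of $V_i$; otherwise $Z_j$ forms a singleton group. SEM-UR: each observed variable is put in its own group; each latent $H_j$ is put in the group of a child $X_i$ if $H_j$ has no other children or all other children of $H_j$ are descendants of $X_i$; otherwise $H_j$ forms a singleton group. AOG equivalence class of $M$: SEM-ME: the set of canonical SEM-ME models on the same underlying variables whose mixing matrix equals that of $M$ up to permutation and nonzero scaling of columns (rows matched by variable) and whose AOG is the same partition. SEM-UR: the set of SEM-UR models on the same observed variables with the same number of latent variables whose mixing matrix equals that of $M$ up to permutation and nonzero scaling of columns and whose AOG coincides with that of $M$ (up to relabeling latent variables). *)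

theory Defs
  imports Complex_Main
begin

text \<open>A weighted graph on node set V is given by w, where w y x is the weight of the
  edge x -> y (the edge exists iff w y x is nonzero).\<close>

definition edge_rel :: "'v set \<Rightarrow> ('v \<Rightarrow> 'v \<Rightarrow> real) \<Rightarrow> ('v \<times> 'v) set" where
  "edge_rel V w = {(x, y). x \<in> V \<and> y \<in> V \<and> w y x \<noteq> 0}"

definition parents :: "'v set \<Rightarrow> ('v \<Rightarrow> 'v \<Rightarrow> real) \<Rightarrow> 'v \<Rightarrow> 'v set" where
  "parents V w x = {y. (y, x) \<in> edge_rel V w}"

definition children :: "'v set \<Rightarrow> ('v \<Rightarrow> 'v \<Rightarrow> real) \<Rightarrow> 'v \<Rightarrow> 'v set" where
  "children V w x = {y. (x, y) \<in> edge_rel V w}"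

definition ancestors :: "'v set \<Rightarrow> ('v \<Rightarrow> 'v \<Rightarrow> real) \<Rightarrow> 'v \<Rightarrow> 'v set" where
  "ancestors V w x = {y. (y, x) \<in> (edge_rel V w)\<^sup>+}"

definition descendants :: "'v set \<Rightarrow> ('v \<Rightarrow> 'v \<Rightarrow> real) \<Rightarrow> 'v \<Rightarrow> 'v set" where
  "descendants V w x = {y. (x, y) \<in> (edge_rel V w)\<^sup>+}"

text \<open>Directed path from a to b, as the list of its nodes (in a DAG every directed path
  is simple, so distinctness is no restriction).\<close>
definition is_dpath :: "'v set \<Rightarrow> ('v \<Rightarrow> 'v \<Rightarrow> real) \<Rightarrow> 'v \<Rightarrow> 'v \<Rightarrow> 'v list \<Rightarrow> bool" where
  "is_dpath V w a b xs \<longleftrightarrow> xs \<noteq> [] \<and> hd xs = a \<and> last xs = b \<and> set xs \<subseteq> V \<and> distinct xs \<and>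
     (\<forall>k. Suc k < length xs \<longrightarrow> w (xs ! Suc k) (xs ! k) \<noteq> 0)"

definition path_weight :: "('v \<Rightarrow> 'v \<Rightarrow> real) \<Rightarrow> 'v list \<Rightarrow> real" where
  "path_weight w xs = (\<Prod>k < length xs - 1. w (xs ! Suc k) (xs ! k))"

definition total_effect :: "'v set \<Rightarrow> ('v \<Rightarrow> 'v \<Rightarrow> real) \<Rightarrow> 'v \<Rightarrow> 'v \<Rightarrow> real" where
  "total_effect V w a b = (\<Sum>xs \<in> {xs. is_dpath V w a b xs}. path_weight w xs)"

text \<open>Underlying variables V_0, ..., V_(p-1) are the naturals below p; c i j is the weight
  c_ij of the edge V_j -> V_i; U is the set of u-leaf nodes.\<close>

definition me_nodes :: "nat \<Rightarrow> nat set" where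
  "me_nodes p = {..<p}"

definition sem_me :: "nat \<Rightarrow> (nat \<Rightarrow> nat \<Rightarrow> real) \<Rightarrow> nat set \<Rightarrow> bool" where
  "sem_me p c U \<longleftrightarrow>
     (\<forall>i j. c i j \<noteq> 0 \<longrightarrow> i < p \<and> j < p) \<and>
     acyclic (edge_rel (me_nodes p) c) \<and>
     U \<subseteq> me_nodes p \<and>
     (\<forall>u \<in> U. children (me_nodes p) c u = {})"

definition me_faithful_a :: "nat \<Rightarrow> (nat \<Rightarrow> nat \<Rightarrow> real) \<Rightarrow> bool" where
  "me_faithful_a p c \<longleftrightarrow>
     (\<forall>a \<in> me_nodes p. \<forall>b \<in> descendants (me_nodes p) c a. total_effect (me_nodes p) c a b \<noteq> 0)"

text \<open>Mixing matrix: row V, column N_V' (V' a nu-leaf node).\<close>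
definition me_cols :: "nat \<Rightarrow> nat set \<Rightarrow> nat set" where
  "me_cols p U = me_nodes p - U"

definition me_mix :: "nat \<Rightarrow> (nat \<Rightarrow> nat \<Rightarrow> real) \<Rightarrow> nat \<Rightarrow> nat \<Rightarrow> real" where
  "me_mix p c v v' = total_effect (me_nodes p) c v' v"

definition me_mix_equiv ::
  "nat \<Rightarrow> (nat \<Rightarrow> nat \<Rightarrow> real) \<Rightarrow> nat set \<Rightarrow> (nat \<Rightarrow> nat \<Rightarrow> real) \<Rightarrow> nat set \<Rightarrow> bool" where
  "me_mix_equiv p c U c' U' \<longleftrightarrow>
     (\<exists>\<sigma> (sc :: nat \<Rightarrow> real). bij_betw \<sigma> (me_cols p U) (me_cols p U') \<and>
        (\<forall>k \<in> me_cols p U. sc k \<noteq> 0 \<and>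
           (\<forall>v \<in> me_nodes p. me_mix p c' v (\<sigma> k) = sc k * me_mix p c v k)))"

text \<open>Ancestral ordered grouping. me_att p c U x i: node x lies in the group of the
  nu-leaf node i.\<close>
definition me_att :: "nat \<Rightarrow> (nat \<Rightarrow> nat \<Rightarrow> real) \<Rightarrow> nat set \<Rightarrow> nat \<Rightarrow> nat \<Rightarrow> bool" where
  "me_att p c U x i \<longleftrightarrow>
     (x = i \<and> x \<in> me_nodes p \<and> x \<notin> U) \<or>
     (x \<in> U \<and> i \<in> parents (me_nodes p) c x \<and>
        parents (me_nodes p) c x - {i} \<subseteq> ancestors (me_nodes p) c i)"

definition me_group :: "nat \<Rightarrow> (nat \<Rightarrow> nat \<Rightarrow> real) \<Rightarrow> nat set \<Rightarrow> nat \<Rightarrow> nat set" where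
  "me_group p c U v =
     {u \<in> me_nodes p. u = v \<or> (\<exists>i. me_att p c U u i \<and> me_att p c U v i)}"

definition me_aog :: "nat \<Rightarrow> (nat \<Rightarrow> nat \<Rightarrow> real) \<Rightarrow> nat set \<Rightarrow> nat set set" where
  "me_aog p c U = me_group p c U ` me_nodes p"

definition me_aog_class :: "nat \<Rightarrow> (nat \<Rightarrow> nat \<Rightarrow> real) \<Rightarrow> nat set \<Rightarrow>
    ((nat \<Rightarrow> nat \<Rightarrow> real) \<times> nat set) set" where
  "me_aog_class p c U =
     {(c', U'). sem_me p c' U' \<and> me_mix_equiv p c U c' U' \<and> me_aog p c' U' = me_aog p c U}"

text \<open>Observed X_0..X_(n-1), latent H_0..H_(m-1). Nodes of the diagram: Inl i = H_i,
  Inr j = X_j. A j k = a_jk, B j i = b_ji.\<close>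

definition ur_nodes :: "nat \<Rightarrow> nat \<Rightarrow> (nat + nat) set" where
  "ur_nodes n m = Inl ` {..<m} \<union> Inr ` {..<n}"

definition sem_ur :: "nat \<Rightarrow> nat \<Rightarrow> (nat \<Rightarrow> nat \<Rightarrow> real) \<Rightarrow> (nat \<Rightarrow> nat \<Rightarrow> real) \<Rightarrow> bool" where
  "sem_ur n m A B \<longleftrightarrow>
     (\<forall>j k. A j k \<noteq> 0 \<longrightarrow> k < j \<and> j < n) \<and>
     (\<forall>j i. B j i \<noteq> 0 \<longrightarrow> j < n \<and> i < m)"

definition ur_w :: "(nat \<Rightarrow> nat \<Rightarrow> real) \<Rightarrow> (nat \<Rightarrow> nat \<Rightarrow> real) \<Rightarrow> nat + nat \<Rightarrow> nat + nat \<Rightarrow> real" where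
  "ur_w A B y x = (case (y, x) of
      (Inr j, Inl i) \<Rightarrow> B j i
    | (Inr j, Inr k) \<Rightarrow> A j k
    | _ \<Rightarrow> 0)"

definition ur_faithful_a :: "nat \<Rightarrow> nat \<Rightarrow> (nat \<Rightarrow> nat \<Rightarrow> real) \<Rightarrow> (nat \<Rightarrow> nat \<Rightarrow> real) \<Rightarrow> bool" where
  "ur_faithful_a n m A B \<longleftrightarrow>
     (\<forall>a \<in> ur_nodes n m. \<forall>b \<in> descendants (ur_nodes n m) (ur_w A B) a.
        total_effect (ur_nodes n m) (ur_w A B) a b \<noteq> 0)"

text \<open>(I - A)^(-1), as the n x n matrix T with (I - A) T = I.\<close>
definition ur_inv :: "nat \<Rightarrow> (nat \<Rightarrow> nat \<Rightarrow> real) \<Rightarrow> nat \<Rightarrow> nat \<Rightarrow> real" where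
  "ur_inv n A = (THE T. (\<forall>i j. \<not> (i < n \<and> j < n) \<longrightarrow> T i j = 0) \<and>
      (\<forall>i < n. \<forall>j < n.
         (\<Sum>k < n. ((if i = k then 1 else 0) - A i k) * T k j) = (if i = j then 1 else 0)))"

text \<open>Mixing matrix [(I-A)^(-1) B, (I-A)^(-1)]; column Inl i = N_(H_i), Inr k = N_(X_k).\<close>
definition ur_cols :: "nat \<Rightarrow> nat \<Rightarrow> (nat + nat) set" where
  "ur_cols n m = Inl ` {..<m} \<union> Inr ` {..<n}"

definition ur_mix :: "nat \<Rightarrow> (nat \<Rightarrow> nat \<Rightarrow> real) \<Rightarrow> (nat \<Rightarrow> nat \<Rightarrow> real) \<Rightarrow> nat \<Rightarrow> nat + nat \<Rightarrow> real" where
  "ur_mix n A B j col = (case col of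
      Inl i \<Rightarrow> (\<Sum>k < n. ur_inv n A j k * B k i)
    | Inr k \<Rightarrow> ur_inv n A j k)"

definition ur_mix_equiv :: "nat \<Rightarrow> nat \<Rightarrow> (nat \<Rightarrow> nat \<Rightarrow> real) \<Rightarrow> (nat \<Rightarrow> nat \<Rightarrow> real) \<Rightarrow>
    (nat \<Rightarrow> nat \<Rightarrow> real) \<Rightarrow> (nat \<Rightarrow> nat \<Rightarrow> real) \<Rightarrow> bool" where
  "ur_mix_equiv n m A B A' B' \<longleftrightarrow>
     (\<exists>\<sigma> (sc :: nat + nat \<Rightarrow> real). bij_betw \<sigma> (ur_cols n m) (ur_cols n m) \<and>
        (\<forall>col \<in> ur_cols n m. sc col \<noteq> 0 \<and>
           (\<forall>j < n. ur_mix n A' B' j (\<sigma> col) = sc col * ur_mix n A B j col)))"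

text \<open>Ancestral ordered grouping. ur_att x y: node x lies in the group of the observed
  node y.\<close>
definition ur_att :: "nat \<Rightarrow> nat \<Rightarrow> (nat \<Rightarrow> nat \<Rightarrow> real) \<Rightarrow> (nat \<Rightarrow> nat \<Rightarrow> real) \<Rightarrow>
    nat + nat \<Rightarrow> nat + nat \<Rightarrow> bool" where
  "ur_att n m A B x y \<longleftrightarrow>
     (x = y \<and> x \<in> Inr ` {..<n}) \<or>
     (x \<in> Inl ` {..<m} \<and> y \<in> children (ur_nodes n m) (ur_w A B) x \<and>
        children (ur_nodes n m) (ur_w A B) x - {y} \<subseteq> descendants (ur_nodes n m) (ur_w A B) y)"

definition ur_group :: "nat \<Rightarrow> nat \<Rightarrow> (nat \<Rightarrow> nat \<Rightarrow> real) \<Rightarrow> (nat \<Rightarrow> nat \<Rightarrow> real) \<Rightarrow>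
    nat + nat \<Rightarrow> (nat + nat) set" where
  "ur_group n m A B v =
     {u \<in> ur_nodes n m. u = v \<or> (\<exists>y. ur_att n m A B u y \<and> ur_att n m A B v y)}"

definition ur_aog :: "nat \<Rightarrow> nat \<Rightarrow> (nat \<Rightarrow> nat \<Rightarrow> real) \<Rightarrow> (nat \<Rightarrow> nat \<Rightarrow> real) \<Rightarrow> (nat + nat) set set" where
  "ur_aog n m A B = ur_group n m A B ` ur_nodes n m"

definition ur_relabel :: "(nat \<Rightarrow> nat) \<Rightarrow> nat + nat \<Rightarrow> nat + nat" where
  "ur_relabel \<pi> = map_sum \<pi> id"

text \<open>Members of the AOG equivalence class, together with a latent relabelling pi
  witnessing that the AOGs coincide.\<close>
definition ur_aog_class :: "nat \<Rightarrow> nat \<Rightarrow> (nat \<Rightarrow> nat \<Rightarrow> real) \<Rightarrow> (nat \<Rightarrow> nat \<Rightarrow> real) \<Rightarrow>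
    ((nat \<Rightarrow> nat \<Rightarrow> real) \<times> (nat \<Rightarrow> nat \<Rightarrow> real) \<times> (nat \<Rightarrow> nat)) set" where
  "ur_aog_class n m A B =
     {(A', B', \<pi>). sem_ur n m A' B' \<and> ur_mix_equiv n m A B A' B' \<and>
        bij_betw \<pi> {..<m} {..<m} \<and>
        ur_aog n m A' B' = (\<lambda>G. ur_relabel \<pi> ` G) ` ur_aog n m A B}"

end

theory Submission
  imports Defs
begin

text \<open>The groups are ordered by a numerical key, injective on groups because groups are
  disjoint. For SEM-ME the key of a group is the least value of card(An v) * p + v over its
  members. Faithfulness makes the mixing matrix of M a record of reachability in M, and the
  equivalence transfers it to M' through the column bijection sigma. Induction over the parents
  of a node, driven by the first-step decomposition of total effects, shows that sigma k lies in
  the group of k and that every parent j of i in M' has the form sigma k with k reaching the group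
  of i in M. A node reaching a group from outside is a proper ancestor of all its members, so the
  key increases along the edge.

  For SEM-UR the key numbers latent variables before observed ones and takes the largest number in
  the group. An edge of M' ends at an observed X_j and starts at an observed X_l with l < j, or at
  a latent variable that is either alone in its group or, by the shared grouping, attached in M' to
  an observed X_l with X_j = X_l or X_j a descendant of X_l.\<close>

section \<open>Orders from keys and attachment groups\<close>

lemma linear_order_on_key:
  fixes f :: "'a \<Rightarrow> nat"
  assumes "inj_on f A"
  shows "linear_order_on A {(x, y). x \<in> A \<and> y \<in> A \<and> f x \<le> f y}"
  using assms
  unfolding linear_order_on_def partial_order_on_def preorder_on_def refl_on_def trans_def
    antisym_def total_on_def
  by (auto simp: inj_on_def)

definition attach_group :: "'a set \<Rightarrow> ('a \<Rightarrow> 'a \<Rightarrow> bool) \<Rightarrow> 'a \<Rightarrow> 'a set" where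
  "attach_group N att v = {u \<in> N. u = v \<or> (\<exists>i. att u i \<and> att v i)}"

locale attachment =
  fixes N :: "'a set" and att :: "'a \<Rightarrow> 'a \<Rightarrow> bool"
  assumes att_functional: "att x i \<Longrightarrow> att x i' \<Longrightarrow> i = i'"
begin

abbreviation group :: "'a \<Rightarrow> 'a set" where
  "group \<equiv> attach_group N att"

lemma mem_group_iff: "u \<in> group v \<longleftrightarrow> u \<in> N \<and> (u = v \<or> (\<exists>i. att u i \<and> att v i))"
  by (simp add: attach_group_def)

lemma mem_group_self: "v \<in> N \<Longrightarrow> v \<in> group v"
  by (simp add: mem_group_iff)

lemma group_subset: "group v \<subseteq> N"
  by (auto simp: mem_group_iff)

lemma group_eq:
  assumes "u \<in> group v" "v \<in> N"
  shows "group u = group v"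
proof (cases "u = v")
  case False
  then obtain i where i: "att u i" "att v i" using assms(1) by (auto simp: mem_group_iff)
  have "att u j \<longleftrightarrow> att v j" for j using i att_functional by blast
  then show ?thesis using i assms by (auto simp: attach_group_def)
qed simp

lemma groups_disjoint:
  assumes "G \<in> group ` N" "H \<in> group ` N" "z \<in> G" "z \<in> H"
  shows "G = H"
proof -
  obtain u v where "u \<in> N" "G = group u" "v \<in> N" "H = group v" using assms(1,2) by blast
  then show ?thesis using assms(3,4) group_eq by metis
qed

lemma inj_on_selected_key:
  fixes \<phi> :: "'a \<Rightarrow> nat"
  assumes sel: "\<And>S. finite S \<Longrightarrow> S \<noteq> {} \<Longrightarrow> sel S \<in> S"
    and "finite N" and "inj_on \<phi> N"
  shows "inj_on (\<lambda>G. sel (\<phi> ` G)) (group ` N)"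
proof (rule inj_onI)
  fix G H assume G: "G \<in> group ` N" and H: "H \<in> group ` N" and eq: "sel (\<phi> ` G) = sel (\<phi> ` H)"
  have block: "K \<subseteq> N \<and> finite K \<and> K \<noteq> {}" if "K \<in> group ` N" for K
    using that \<open>finite N\<close> group_subset mem_group_self by (auto intro: finite_subset)
  obtain x where x: "x \<in> G" "sel (\<phi> ` G) = \<phi> x" using sel[of "\<phi> ` G"] block[OF G] by auto
  obtain y where y: "y \<in> H" "sel (\<phi> ` H) = \<phi> y" using sel[of "\<phi> ` H"] block[OF H] by auto
  have "\<phi> x = \<phi> y" using x y eq by simp
  then have "x = y" using \<open>inj_on \<phi> N\<close> block[OF G] block[OF H] x y by (auto dest: inj_onD)
  then show "G = H" using groups_disjoint[OF G H] x y by blast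
qed

end

section \<open>Total effects in weighted DAGs\<close>

lemma successively_rtrancl_last:
  "successively (\<lambda>x y. (x, y) \<in> r) xs \<Longrightarrow> v \<in> set xs \<Longrightarrow> (v, last xs) \<in> r\<^sup>*"
proof (induction "\<lambda>x y. (x, y) \<in> r" xs arbitrary: v rule: successively.induct)
  case (3 x y xs)
  then show ?case by (auto intro: converse_rtrancl_into_rtrancl)
qed auto

lemma path_weight_snoc:
  assumes "ys \<noteq> []"
  shows "path_weight w (ys @ [b]) = path_weight w ys * w b (last ys)"
proof -
  obtain n where n: "length ys = Suc n" using assms by (cases ys) auto
  have "path_weight w (ys @ [b]) = (\<Prod>k<n. w ((ys @ [b]) ! Suc k) ((ys @ [b]) ! k)) * w b (ys ! n)"
    by (simp add: path_weight_def n nth_append)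
  also have "(\<Prod>k<n. w ((ys @ [b]) ! Suc k) ((ys @ [b]) ! k)) = path_weight w ys"
    by (auto simp: path_weight_def n nth_append intro: prod.cong)
  finally show ?thesis using n assms by (simp add: last_conv_nth)
qed

locale dag =
  fixes V :: "'v set" and w :: "'v \<Rightarrow> 'v \<Rightarrow> real"
  assumes finite_nodes: "finite V"
    and weight_support: "w y x \<noteq> 0 \<Longrightarrow> x \<in> V \<and> y \<in> V"
    and acyclic_edges: "acyclic (edge_rel V w)"
begin

abbreviation E :: "('v \<times> 'v) set" where
  "E \<equiv> edge_rel V w"

abbreviation TE :: "'v \<Rightarrow> 'v \<Rightarrow> real" where
  "TE \<equiv> total_effect V w"

lemma edge_iff: "(x, y) \<in> E \<longleftrightarrow> w y x \<noteq> 0"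
  using weight_support by (auto simp: edge_rel_def)

lemma edge_nodes: "(x, y) \<in> E \<Longrightarrow> x \<in> V \<and> y \<in> V"
  by (simp add: edge_rel_def)

lemma finite_parents: "finite (parents V w v)"
  by (rule finite_subset[OF _ finite_nodes]) (auto simp: parents_def edge_rel_def)

lemma not_trancl_refl: "(x, x) \<notin> E\<^sup>+"
  using acyclic_edges by (simp add: acyclic_def)

lemma rtrancl_antisym:
  assumes "(x, y) \<in> E\<^sup>*" "(y, x) \<in> E\<^sup>*"
  shows "x = y"
proof (rule ccontr)
  assume "x \<noteq> y"
  then have "(x, y) \<in> E\<^sup>+" using assms(1) by (simp add: rtrancl_eq_or_trancl)
  then have "(x, x) \<in> E\<^sup>+" using assms(2) by (rule trancl_rtrancl_trancl)
  then show False using not_trancl_refl by blast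
qed

lemma is_dpath_iff:
  "is_dpath V w a b xs \<longleftrightarrow> xs \<noteq> [] \<and> hd xs = a \<and> last xs = b \<and> set xs \<subseteq> V \<and> distinct xs \<and>
     successively (\<lambda>x y. (x, y) \<in> E) xs"
  by (simp add: is_dpath_def successively_conv_nth edge_iff)

lemma dpath_rtrancl: "is_dpath V w a b xs \<Longrightarrow> x \<in> set xs \<Longrightarrow> (x, b) \<in> E\<^sup>*"
  by (auto simp: is_dpath_iff dest: successively_rtrancl_last)

lemma finite_dpaths: "finite {xs. is_dpath V w a b xs}"
proof (rule finite_subset)
  show "{xs. is_dpath V w a b xs} \<subseteq> {xs. set xs \<subseteq> V \<and> length xs \<le> card V}"
  proof
    fix xs assume "xs \<in> {xs. is_dpath V w a b xs}"
    then have xs: "set xs \<subseteq> V" "distinct xs" by (simp_all add: is_dpath_def)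
    then have "length xs \<le> card V" using distinct_card card_mono[OF finite_nodes] by metis
    with xs show "xs \<in> {xs. set xs \<subseteq> V \<and> length xs \<le> card V}" by simp
  qed
qed (rule finite_lists_length_le[OF finite_nodes])

lemma dpaths_refl: "a \<in> V \<Longrightarrow> {xs. is_dpath V w a a xs} = {[a]}"
proof (intro equalityI subsetI)
  fix xs assume "xs \<in> {xs. is_dpath V w a a xs}"
  then have p: "is_dpath V w a a xs" by simp
  then obtain ys where xs: "xs = a # ys" by (cases xs) (auto simp: is_dpath_iff)
  show "xs \<in> {[a]}"
  proof (cases ys)
    case (Cons y zs)
    then have "(a, y) \<in> E" "(y, a) \<in> E\<^sup>*"
      using p xs dpath_rtrancl[OF p, of y] by (auto simp: is_dpath_iff)
    then show ?thesis using not_trancl_refl by (meson rtrancl_into_trancl2)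
  qed (simp add: xs)
qed (simp add: is_dpath_iff)

lemma total_effect_refl: "a \<in> V \<Longrightarrow> TE a a = 1"
  by (simp add: total_effect_def dpaths_refl path_weight_def)

lemma total_effect_nonzero_rtrancl:
  assumes "TE a b \<noteq> 0"
  shows "(a, b) \<in> E\<^sup>*"
proof -
  obtain xs where "is_dpath V w a b xs"
    using assms unfolding total_effect_def by (metis empty_Collect_eq sum.empty)
  moreover from this have "a \<in> set xs" by (auto simp: is_dpath_def)
  ultimately show ?thesis by (rule dpath_rtrancl)
qed

lemma dpath_snoc_iff:
  assumes "a \<noteq> b"
  shows "is_dpath V w a b xs \<longleftrightarrow> (\<exists>j ys. xs = ys @ [b] \<and> is_dpath V w a j ys \<and> (j, b) \<in> E)"
proof
  assume p: "is_dpath V w a b xs"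
  define ys where "ys = butlast xs"
  have xs: "xs = ys @ [b]" using p unfolding ys_def is_dpath_def by (metis append_butlast_last_id)
  have "ys \<noteq> []" using p assms xs by (auto simp: is_dpath_def)
  then show "\<exists>j ys. xs = ys @ [b] \<and> is_dpath V w a j ys \<and> (j, b) \<in> E"
    using p xs by (auto simp: is_dpath_iff successively_append_iff)
next
  assume "\<exists>j ys. xs = ys @ [b] \<and> is_dpath V w a j ys \<and> (j, b) \<in> E"
  then obtain j ys where xs: "xs = ys @ [b]" and p: "is_dpath V w a j ys" and jb: "(j, b) \<in> E"
    by blast
  have "b \<notin> set ys"
    using dpath_rtrancl[OF p] jb not_trancl_refl by (meson rtrancl_into_trancl1)
  then show "is_dpath V w a b xs"
    using p xs jb edge_nodes by (auto simp: is_dpath_iff successively_append_iff)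
qed

lemma total_effect_parents:
  assumes "a \<noteq> b"
  shows "TE a b = (\<Sum>j\<in>parents V w b. w b j * TE a j)"
proof -
  let ?S = "SIGMA j:parents V w b. {ys. is_dpath V w a j ys}"
  let ?snoc = "\<lambda>(j::'v, ys). ys @ [b]"
  have paths: "{xs. is_dpath V w a b xs} = ?snoc ` ?S"
    using dpath_snoc_iff[OF assms] by (auto simp: parents_def)
  have inj: "inj_on ?snoc ?S"
    by (rule inj_onI) (auto simp: is_dpath_def)
  have "TE a b = sum (path_weight w \<circ> ?snoc) ?S"
    unfolding total_effect_def paths by (rule sum.reindex[OF inj])
  also have "\<dots> = (\<Sum>(j, ys)\<in>?S. path_weight w (ys @ [b]))"
    by (simp add: comp_def case_prod_unfold)
  also have "\<dots> = (\<Sum>j\<in>parents V w b. \<Sum>ys | is_dpath V w a j ys. path_weight w (ys @ [b]))"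
    by (rule sum.Sigma[symmetric]) (use finite_parents finite_dpaths in auto)
  also have "\<dots> = (\<Sum>j\<in>parents V w b. \<Sum>ys | is_dpath V w a j ys. path_weight w ys * w b j)"
    by (intro sum.cong refl) (auto simp: path_weight_snoc is_dpath_def)
  also have "\<dots> = (\<Sum>j\<in>parents V w b. w b j * TE a j)"
    by (simp add: total_effect_def sum_distrib_left mult.commute)
  finally show ?thesis .
qed

lemma wf_converse_trancl: "wf ((E\<^sup>+)\<inverse>)"
proof -
  have "finite E" using finite_nodes edge_nodes by (auto intro: finite_subset[of _ "V \<times> V"])
  then have "wf (E\<inverse>)" using acyclic_edges by (rule finite_acyclic_wf_converse)
  then show ?thesis by (simp add: wf_trancl trancl_converse[symmetric])
qed

text \<open>Induction on q along the descendant order: either q has a nonzero total effect on another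
  parent j of v, which is then a proper descendant of q and satisfies P, or the first-step
  decomposition of the total effect of q on v collapses to the edge weight.\<close>
lemma parents_total_effect_induct:
  assumes parent: "(q, v) \<in> E"
    and closed: "\<And>q j. (q, v) \<in> E \<Longrightarrow> (j, v) \<in> E \<Longrightarrow> P j \<Longrightarrow> TE q j \<noteq> 0 \<Longrightarrow> P q"
    and direct: "\<And>q. (q, v) \<in> E \<Longrightarrow> TE q v \<noteq> 0 \<Longrightarrow> P q"
  shows "P q"
  using wf_converse_trancl parent
proof (induction q rule: wf_induct_rule)
  case (less q)
  have q: "q \<in> parents V w v" "q \<in> V" using less.prems edge_nodes by (auto simp: parents_def)
  show ?case
  proof (cases "\<exists>j \<in> parents V w v - {q}. TE q j \<noteq> 0")
    case True
    then obtain j where j: "(j, v) \<in> E" "j \<noteq> q" "TE q j \<noteq> 0" by (auto simp: parents_def)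
    have "(q, j) \<in> E\<^sup>*" using j(3) by (rule total_effect_nonzero_rtrancl)
    then have "(q, j) \<in> E\<^sup>+" using j(2) by (simp add: rtrancl_eq_or_trancl)
    then have "P j" using less.IH j(1) by simp
    then show ?thesis using closed less.prems j by blast
  next
    case False
    have "q \<noteq> v" using less.prems not_trancl_refl by blast
    then have "TE q v = (\<Sum>j\<in>parents V w v. w v j * TE q j)" by (rule total_effect_parents)
    also have "\<dots> = w v q * TE q q + (\<Sum>j\<in>parents V w v - {q}. w v j * TE q j)"
      using finite_parents q(1) by (rule sum.remove)
    also have "\<dots> = w v q" using False total_effect_refl[OF q(2)] by simp
    finally have "TE q v \<noteq> 0" using less.prems edge_iff by simp
    then show ?thesis using direct less.prems by blast
  qed
qed

end

section \<open>SEM-ME\<close>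

definition me_rank :: "nat \<Rightarrow> (nat \<Rightarrow> nat \<Rightarrow> real) \<Rightarrow> nat \<Rightarrow> nat" where
  "me_rank p c v = card (ancestors (me_nodes p) c v) * p + v"

locale me_model =
  fixes p :: nat and c :: "nat \<Rightarrow> nat \<Rightarrow> real" and U :: "nat set"
  assumes model: "sem_me p c U"
begin

abbreviation N :: "nat set" where
  "N \<equiv> me_nodes p"

abbreviation att :: "nat \<Rightarrow> nat \<Rightarrow> bool" where
  "att \<equiv> me_att p c U"

sublocale dag N c
proof
  show "finite N" by (simp add: me_nodes_def)
  show "c y x \<noteq> 0 \<Longrightarrow> x \<in> N \<and> y \<in> N" for x y
    using model by (auto simp: sem_me_def me_nodes_def)
  show "acyclic (edge_rel N c)" using model by (simp add: sem_me_def)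
qed

lemma parent_not_u_leaf: "(q, x) \<in> E \<Longrightarrow> q \<notin> U"
  using model by (auto simp: sem_me_def children_def)

lemma me_mix_eq: "me_mix p c v k = TE k v"
  by (simp add: me_mix_def)

lemma att_nu_leaf: "att x i \<Longrightarrow> x \<notin> U \<Longrightarrow> x = i"
  by (simp add: me_att_def)

lemma att_u_leaf:
  "att x i \<Longrightarrow> x \<in> U \<Longrightarrow> (i, x) \<in> E \<and> (\<forall>q. (q, x) \<in> E \<longrightarrow> q = i \<or> (q, i) \<in> E\<^sup>+)"
  unfolding me_att_def parents_def ancestors_def by blast

lemma att_root: "att x i \<Longrightarrow> i \<in> N \<and> i \<notin> U"
  unfolding me_att_def parents_def by (auto dest: edge_nodes parent_not_u_leaf)

lemma att_self: "i \<in> N \<Longrightarrow> i \<notin> U \<Longrightarrow> att i i"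
  by (simp add: me_att_def)

lemma att_u_leafI:
  assumes "x \<in> U" "(i, x) \<in> E" "\<And>q. (q, x) \<in> E \<Longrightarrow> (q, i) \<in> E\<^sup>*"
  shows "att x i"
  using assms unfolding me_att_def parents_def ancestors_def by (blast dest: rtranclD)

lemma att_functional:
  assumes "att x i" "att x i'"
  shows "i = i'"
proof (cases "x \<in> U")
  case True
  then have "(i', x) \<in> E" "(i, x) \<in> E" "\<forall>q. (q, x) \<in> E \<longrightarrow> q = i \<or> (q, i) \<in> E\<^sup>+"
    "\<forall>q. (q, x) \<in> E \<longrightarrow> q = i' \<or> (q, i') \<in> E\<^sup>+"
    using assms att_u_leaf by blast+
  then have "(i', i) \<in> E\<^sup>*" "(i, i') \<in> E\<^sup>*" by (auto dest: trancl_into_rtrancl)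
  then show ?thesis using rtrancl_antisym by blast
qed (use assms att_nu_leaf in blast)

sublocale attachment N att
  by unfold_locales (rule att_functional)

lemma me_group_eq: "me_group p c U = group"
  by (simp add: me_group_def attach_group_def fun_eq_iff)

lemma rtrancl_att_root:
  assumes "att v t" "(x, v) \<in> E\<^sup>+"
  shows "(x, t) \<in> E\<^sup>*"
proof (cases "v \<in> U")
  case True
  obtain z where xz: "(x, z) \<in> E\<^sup>*" and zv: "(z, v) \<in> E" using tranclD2[OF assms(2)] by blast
  have "z = t \<or> (z, t) \<in> E\<^sup>+" using att_u_leaf[OF assms(1) True] zv by blast
  then have "(z, t) \<in> E\<^sup>*" by auto
  with xz show ?thesis by (rule rtrancl_trans)
next
  case False
  with assms(1) have "v = t" by (rule att_nu_leaf)
  then show ?thesis using assms(2) by simp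
qed

lemma rtrancl_group_root:
  assumes "(k, v) \<in> E\<^sup>*" "v \<in> group h" "h \<notin> U" "k \<notin> U"
  shows "(k, h) \<in> E\<^sup>*"
proof -
  have "v = h \<or> att v h" using assms(2,3) att_nu_leaf by (auto simp: mem_group_iff)
  then show ?thesis
  proof
    assume att: "att v h"
    show ?thesis
    proof (cases "k = v")
      case True
      then show ?thesis using att att_nu_leaf assms(4) by blast
    next
      case False
      then have "(k, v) \<in> E\<^sup>+" using assms(1) by (simp add: rtrancl_eq_or_trancl)
      then show ?thesis by (rule rtrancl_att_root[OF att])
    qed
  qed (use assms(1) in simp)
qed

lemma trancl_into_group:
  assumes xy: "(x, y) \<in> E\<^sup>+" and x: "x \<notin> group y" and y': "y' \<in> group y"
  shows "(x, y') \<in> E\<^sup>+"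
proof (cases "y' = y")
  case False
  then obtain t where t: "att y' t" "att y t" using y' by (auto simp: mem_group_iff)
  have "x \<noteq> t"
    using x t(2) att_root att_self by (auto simp: mem_group_iff)
  then have "(x, t) \<in> E\<^sup>+" using rtrancl_att_root[OF t(2) xy] by (simp add: rtrancl_eq_or_trancl)
  show ?thesis
  proof (cases "y' \<in> U")
    case True
    then have "(t, y') \<in> E" using att_u_leaf t(1) by blast
    with \<open>(x, t) \<in> E\<^sup>+\<close> show ?thesis by (rule trancl_into_trancl)
  qed (use t(1) att_nu_leaf \<open>(x, t) \<in> E\<^sup>+\<close> in blast)
qed (use xy in simp)

lemma me_rank_inj: "inj_on (me_rank p c) N"
proof (rule inj_onI)
  fix x y assume "x \<in> N" "y \<in> N" and eq: "me_rank p c x = me_rank p c y"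
  then have "x < p" "y < p" by (simp_all add: me_nodes_def)
  then have "me_rank p c x mod p = x" "me_rank p c y mod p = y" by (simp_all add: me_rank_def)
  with eq show "x = y" by metis
qed

lemma me_rank_less:
  assumes "(x, y) \<in> E\<^sup>+"
  shows "me_rank p c x < me_rank p c y"
proof -
  have fin: "finite (ancestors N c y)"
    by (rule finite_subset[OF _ finite_nodes]) (auto simp: ancestors_def edge_rel_def dest: tranclD)
  have "ancestors N c x \<subset> ancestors N c y"
    using assms not_trancl_refl by (auto simp: ancestors_def intro: trancl_trans)
  then have "card (ancestors N c x) < card (ancestors N c y)" by (rule psubset_card_mono[OF fin])
  then have "Suc (card (ancestors N c x)) * p \<le> card (ancestors N c y) * p"
    by (intro mult_le_mono1) simp
  moreover have "x < p" using assms edge_nodes by (auto simp: me_nodes_def dest: tranclD)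
  ultimately show ?thesis by (simp add: me_rank_def)
qed

lemma group_key_less:
  assumes x: "x \<in> group j" and y: "y \<in> group i" and xy: "(x, y) \<in> E\<^sup>*"
    and ne: "group j \<noteq> group i" and i: "i \<in> N" and j: "j \<in> N"
  shows "Min (me_rank p c ` group j) < Min (me_rank p c ` group i)"
proof -
  have gx: "group x = group j" and gy: "group y = group i"
    using group_eq x y i j by blast+
  have yN: "y \<in> N" using y by (simp add: mem_group_iff)
  have "x \<noteq> y" using gx gy ne by auto
  then have "(x, y) \<in> E\<^sup>+" using xy by (simp add: rtrancl_eq_or_trancl)
  moreover have "x \<notin> group y" using group_eq[OF _ yN] gx gy ne by auto
  ultimately have less: "me_rank p c x < me_rank p c y'" if "y' \<in> group i" for y'
    using that gy trancl_into_group me_rank_less by blast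
  have fin: "finite (group v)" for v
    by (rule finite_subset[OF group_subset finite_nodes])
  have "Min (me_rank p c ` group j) \<le> me_rank p c x" using fin x by simp
  also have "\<dots> < Min (me_rank p c ` group i)"
    using fin mem_group_self[OF i] less by (subst Min_gr_iff) auto
  finally show ?thesis .
qed

end

locale me_equivalent = M: me_model p c U + M': me_model p c' U' for p c U c' U' +
  fixes \<sigma> :: "nat \<Rightarrow> nat" and sc :: "nat \<Rightarrow> real"
  assumes faithful: "me_faithful_a p c"
    and cols_bij: "bij_betw \<sigma> (me_cols p U) (me_cols p U')"
    and mix_scaled: "k \<in> me_cols p U \<Longrightarrow>
      sc k \<noteq> 0 \<and> (\<forall>v \<in> me_nodes p. me_mix p c' v (\<sigma> k) = sc k * me_mix p c v k)"
    and same_aog: "me_aog p c' U' = me_aog p c U"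
begin

lemma sigma_col: "k \<in> me_cols p U \<Longrightarrow> \<sigma> k \<in> me_cols p U'"
  using cols_bij bij_betwE by blast

lemma col_obtain:
  assumes "b \<in> me_cols p U'"
  obtains k where "k \<in> me_cols p U" "\<sigma> k = b"
  using assms cols_bij by (metis bij_betw_imp_surj_on imageE)

text \<open>Faithfulness of the first model turns the shared mixing matrix into a reachability test.\<close>
lemma effect_sigma_iff:
  assumes k: "k \<in> me_cols p U" and v: "v \<in> M.N"
  shows "M'.TE (\<sigma> k) v \<noteq> 0 \<longleftrightarrow> (k, v) \<in> M.E\<^sup>*"
proof -
  have "M'.TE (\<sigma> k) v = sc k * M.TE k v" and "sc k \<noteq> 0"
    using mix_scaled[OF k] v by (simp_all add: M.me_mix_eq M'.me_mix_eq)
  moreover have "M.TE k v \<noteq> 0 \<longleftrightarrow> (k, v) \<in> M.E\<^sup>*"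
  proof
    assume "(k, v) \<in> M.E\<^sup>*"
    then consider "k = v" | "(k, v) \<in> M.E\<^sup>+" by (auto simp: rtrancl_eq_or_trancl)
    then show "M.TE k v \<noteq> 0"
      using faithful k M.total_effect_refl
      by cases (auto simp: me_faithful_a_def descendants_def me_cols_def)
  qed (rule M.total_effect_nonzero_rtrancl)
  ultimately show ?thesis by simp
qed

lemma sigma_fixed:
  assumes k: "k \<in> me_cols p U" and kU': "k \<notin> U'"
  shows "\<sigma> k = k"
proof -
  have kN: "k \<in> M.N" and aN: "\<sigma> k \<in> M.N"
    using k sigma_col[OF k] by (simp_all add: me_cols_def)
  have ka: "(k, \<sigma> k) \<in> M.E\<^sup>*"
    using effect_sigma_iff[OF k aN] M'.total_effect_refl[OF aN] by simp
  have "k \<in> me_cols p U'" using kN kU' by (simp add: me_cols_def)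
  then obtain b where b: "b \<in> me_cols p U" "\<sigma> b = k" by (rule col_obtain)
  have "(b, k) \<in> M.E\<^sup>*" using effect_sigma_iff[OF b(1) kN] M'.total_effect_refl[OF kN] b(2) by simp
  then have "(b, \<sigma> k) \<in> M.E\<^sup>*" using ka by (rule rtrancl_trans)
  then have "(k, \<sigma> k) \<in> M'.E\<^sup>*"
    using effect_sigma_iff[OF b(1) aN] b(2) M'.total_effect_nonzero_rtrancl by simp
  moreover have "(\<sigma> k, k) \<in> M'.E\<^sup>*"
    using effect_sigma_iff[OF k kN] M'.total_effect_nonzero_rtrancl by simp
  ultimately show ?thesis by (rule M'.rtrancl_antisym[symmetric])
qed

lemma same_group:
  assumes v: "v \<in> M.N"
  shows "M'.group v = M.group v"
proof -
  have "M'.group v \<in> M.group ` M.N"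
    using same_aog v by (auto simp: me_aog_def M.me_group_eq M'.me_group_eq)
  then obtain u where u: "u \<in> M.N" "M'.group v = M.group u" by blast
  then show ?thesis using M'.mem_group_self[OF v] M.group_eq by simp
qed

lemma parent_obtain:
  assumes "(q, x) \<in> M'.E"
  obtains k where "k \<in> me_cols p U" "\<sigma> k = q"
proof -
  have "q \<in> me_cols p U'" using assms M'.edge_nodes M'.parent_not_u_leaf by (simp add: me_cols_def)
  then show ?thesis using col_obtain that by blast
qed

lemma parent_reaches_sigma:
  assumes k: "k \<in> me_cols p U" and qk: "(q, k) \<in> M'.E"
  shows "(q, \<sigma> k) \<in> M'.E\<^sup>*"
  using qk
proof (rule M'.parents_total_effect_induct)
  fix q j assume "(j, \<sigma> k) \<in> M'.E\<^sup>*" "M'.TE q j \<noteq> 0"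
  then show "(q, \<sigma> k) \<in> M'.E\<^sup>*" by (blast intro: M'.total_effect_nonzero_rtrancl rtrancl_trans)
next
  fix q assume qk: "(q, k) \<in> M'.E" and "M'.TE q k \<noteq> 0"
  have kN: "k \<in> M.N" and aN: "\<sigma> k \<in> M.N" using k sigma_col[OF k] by (simp_all add: me_cols_def)
  obtain b where b: "b \<in> me_cols p U" "\<sigma> b = q" using qk by (rule parent_obtain)
  have "(b, k) \<in> M.E\<^sup>*" using effect_sigma_iff[OF b(1) kN] \<open>M'.TE q k \<noteq> 0\<close> b(2) by simp
  moreover have "(k, \<sigma> k) \<in> M.E\<^sup>*"
    using effect_sigma_iff[OF k aN] M'.total_effect_refl[OF aN] by simp
  ultimately have "(b, \<sigma> k) \<in> M.E\<^sup>*" by (rule rtrancl_trans)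
  then show "(q, \<sigma> k) \<in> M'.E\<^sup>*"
    using effect_sigma_iff[OF b(1) aN] b(2) M'.total_effect_nonzero_rtrancl by simp
qed

text \<open>If k is a u-leaf node of M', then sigma k is a parent of k in M' of which all other
  parents are ancestors, so k is attached to sigma k; the AOGs agree, so this also holds in M.\<close>
lemma sigma_in_group:
  assumes k: "k \<in> me_cols p U"
  shows "\<sigma> k \<in> M.group k"
proof (cases "k \<in> U'")
  case True
  have kN: "k \<in> M.N" and aN: "\<sigma> k \<in> M.N" and aU': "\<sigma> k \<notin> U'"
    using k sigma_col[OF k] by (simp_all add: me_cols_def)
  have "(\<sigma> k, k) \<in> M'.E\<^sup>*"
    using effect_sigma_iff[OF k kN] M'.total_effect_nonzero_rtrancl by simp
  moreover have "\<sigma> k \<noteq> k" using True aU' by auto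
  ultimately have "(\<sigma> k, k) \<in> M'.E\<^sup>+" by (simp add: rtrancl_eq_or_trancl)
  then obtain z where az: "(\<sigma> k, z) \<in> M'.E\<^sup>*" and zk: "(z, k) \<in> M'.E" by (blast dest: tranclD2)
  have "z = \<sigma> k" using M'.rtrancl_antisym[OF parent_reaches_sigma[OF k zk] az] .
  then have "M'.att k (\<sigma> k)"
    using True zk parent_reaches_sigma[OF k] by (blast intro: M'.att_u_leafI)
  moreover have "M'.att (\<sigma> k) (\<sigma> k)" using aN aU' by (rule M'.att_self)
  ultimately have "\<sigma> k \<in> M'.group k" using aN unfolding M'.mem_group_iff by blast
  then show ?thesis using same_group[OF kN] by simp
next
  case False
  then show ?thesis using sigma_fixed[OF k] M.mem_group_self k by (simp add: me_cols_def)
qed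

lemma parent_reaches_group:
  assumes i: "i \<in> M.N" and ji: "(j, i) \<in> M'.E"
  shows "\<exists>k \<in> me_cols p U. \<sigma> k = j \<and> (\<exists>y \<in> M.group i. (k, y) \<in> M.E\<^sup>*)"
  using ji
proof (rule M'.parents_total_effect_induct)
  fix q j assume qi: "(q, i) \<in> M'.E" and ji: "(j, i) \<in> M'.E" and "M'.TE q j \<noteq> 0"
    and "\<exists>k \<in> me_cols p U. \<sigma> k = j \<and> (\<exists>y \<in> M.group i. (k, y) \<in> M.E\<^sup>*)"
  then obtain l y where l: "l \<in> me_cols p U" "\<sigma> l = j" and y: "y \<in> M.group i" "(l, y) \<in> M.E\<^sup>*"
    by blast
  obtain k where k: "k \<in> me_cols p U" "\<sigma> k = q" using qi by (rule parent_obtain)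
  have "j \<in> M.N" using ji M'.edge_nodes by blast
  then have "(k, j) \<in> M.E\<^sup>*" using effect_sigma_iff[OF k(1)] k(2) \<open>M'.TE q j \<noteq> 0\<close> by simp
  moreover have "j \<in> M.group l" using sigma_in_group[OF l(1)] l(2) by simp
  ultimately have "(k, l) \<in> M.E\<^sup>*"
    using k(1) l(1) by (auto simp: me_cols_def intro: M.rtrancl_group_root)
  then have "(k, y) \<in> M.E\<^sup>*" using y(2) by (rule rtrancl_trans)
  then show "\<exists>k \<in> me_cols p U. \<sigma> k = q \<and> (\<exists>y \<in> M.group i. (k, y) \<in> M.E\<^sup>*)"
    using k y(1) by blast
next
  fix q assume qi: "(q, i) \<in> M'.E" and "M'.TE q i \<noteq> 0"
  obtain k where k: "k \<in> me_cols p U" "\<sigma> k = q" using qi by (rule parent_obtain)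
  then have "(k, i) \<in> M.E\<^sup>*" using effect_sigma_iff[OF k(1) i] \<open>M'.TE q i \<noteq> 0\<close> by simp
  then show "\<exists>k \<in> me_cols p U. \<sigma> k = q \<and> (\<exists>y \<in> M.group i. (k, y) \<in> M.E\<^sup>*)"
    using k M.mem_group_self[OF i] by blast
qed

lemma edge_connects_groups:
  assumes i: "i \<in> M.N" and c': "c' i j \<noteq> 0"
  shows "\<exists>x \<in> M.group j. \<exists>y \<in> M.group i. (x, y) \<in> M.E\<^sup>*"
proof -
  have "(j, i) \<in> M'.E" using c' by (simp add: M'.edge_iff)
  then obtain k y where k: "k \<in> me_cols p U" "\<sigma> k = j" and y: "y \<in> M.group i" "(k, y) \<in> M.E\<^sup>*"
    using parent_reaches_group[OF i] by blast
  have kN: "k \<in> M.N" using k(1) by (simp add: me_cols_def)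
  have "M.group j = M.group k" using M.group_eq[OF sigma_in_group[OF k(1)] kN] k(2) by simp
  then have "k \<in> M.group j" using M.mem_group_self[OF kN] by simp
  then show ?thesis using y by blast
qed

end

lemma me_groups_ordered:
  assumes model: "sem_me p c U" and faithful: "me_faithful_a p c"
  shows "\<exists>R. linear_order_on (me_aog p c U) R \<and>
    (\<forall>(c', U') \<in> me_aog_class p c U. \<forall>i \<in> me_nodes p. \<forall>j \<in> me_nodes p.
       c' i j \<noteq> 0 \<and> me_group p c U j \<noteq> me_group p c U i \<longrightarrow>
       (me_group p c U j, me_group p c U i) \<in> R)"
proof -
  interpret M: me_model p c U by (rule me_model.intro[OF model])
  define key where "key G = Min (me_rank p c ` G)" for G
  have aog: "me_aog p c U = M.group ` M.N" by (simp add: me_aog_def M.me_group_eq)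
  have "inj_on key (me_aog p c U)"
    unfolding aog key_def using M.finite_nodes M.me_rank_inj by (intro M.inj_on_selected_key) simp_all
  moreover have "key (me_group p c U j) < key (me_group p c U i)"
    if cl: "(c', U') \<in> me_aog_class p c U" and i: "i \<in> M.N" and j: "j \<in> M.N"
      and edge: "c' i j \<noteq> 0" and ne: "me_group p c U j \<noteq> me_group p c U i" for c' U' i j
  proof -
    have model': "sem_me p c' U'" and equiv: "me_mix_equiv p c U c' U'"
      and same: "me_aog p c' U' = me_aog p c U"
      using cl by (simp_all add: me_aog_class_def)
    obtain \<sigma> sc where bij: "bij_betw \<sigma> (me_cols p U) (me_cols p U')"
      and mix: "\<And>k. k \<in> me_cols p U \<Longrightarrow>
        sc k \<noteq> 0 \<and> (\<forall>v \<in> me_nodes p. me_mix p c' v (\<sigma> k) = sc k * me_mix p c v k)"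
      using equiv unfolding me_mix_equiv_def by blast
    interpret M': me_model p c' U' by (rule me_model.intro[OF model'])
    interpret me_equivalent p c U c' U' \<sigma> sc
      using faithful bij mix same by unfold_locales blast+
    obtain x y where "x \<in> M.group j" "y \<in> M.group i" "(x, y) \<in> M.E\<^sup>*"
      using edge_connects_groups[OF i edge] by blast
    then show ?thesis
      using M.group_key_less i j ne by (simp add: key_def M.me_group_eq)
  qed
  ultimately show ?thesis
    by (intro exI[of _ "{(G, H). G \<in> me_aog p c U \<and> H \<in> me_aog p c U \<and> key G \<le> key H}"])
      (fastforce simp: linear_order_on_key me_aog_def)
qed

section \<open>SEM-UR\<close>

definition ur_rank :: "nat + nat \<Rightarrow> nat" where
  "ur_rank = case_sum (\<lambda>_. 0) Suc"

definition ur_key :: "nat \<Rightarrow> nat + nat \<Rightarrow> nat" where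
  "ur_key m = case_sum id ((+) m)"

lemma ur_w_nonzero_cases:
  assumes "ur_w A B y x \<noteq> 0"
  obtains j i where "y = Inr j" "x = Inl i" "B j i \<noteq> 0"
    | j k where "y = Inr j" "x = Inr k" "A j k \<noteq> 0"
  using assms by (cases y; cases x) (auto simp: ur_w_def)

lemma ur_relabel_simps [simp]:
  "ur_relabel \<pi> (Inl i) = Inl (\<pi> i)" "ur_relabel \<pi> (Inr j) = Inr j"
  by (simp_all add: ur_relabel_def)

locale ur_model =
  fixes n m :: nat and A B :: "nat \<Rightarrow> nat \<Rightarrow> real"
  assumes model: "sem_ur n m A B"
begin

abbreviation NU :: "(nat + nat) set" where
  "NU \<equiv> ur_nodes n m"

abbreviation EU :: "((nat + nat) \<times> (nat + nat)) set" where
  "EU \<equiv> edge_rel NU (ur_w A B)"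

abbreviation uatt :: "nat + nat \<Rightarrow> nat + nat \<Rightarrow> bool" where
  "uatt \<equiv> ur_att n m A B"

lemma Inl_mem_nodes [simp]: "Inl i \<in> NU \<longleftrightarrow> i < m"
  and Inr_mem_nodes [simp]: "Inr j \<in> NU \<longleftrightarrow> j < n"
  by (auto simp: ur_nodes_def)

lemma lower_triangular: "A j k \<noteq> 0 \<Longrightarrow> k < j"
  using model by (simp add: sem_ur_def)

lemma edge_rank_less: "(x, y) \<in> EU \<Longrightarrow> ur_rank x < ur_rank y"
  by (auto simp: edge_rel_def ur_rank_def elim!: ur_w_nonzero_cases dest: lower_triangular)

lemma trancl_rank_less: "(x, y) \<in> EU\<^sup>+ \<Longrightarrow> ur_rank x < ur_rank y"
  by (induction rule: trancl_induct) (auto dest: edge_rank_less)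

lemma uatt_observed: "uatt (Inr l) t \<Longrightarrow> t = Inr l"
  by (auto simp: ur_att_def)

lemma uatt_latent:
  "uatt (Inl i) t \<Longrightarrow> (Inl i, t) \<in> EU \<and> (\<forall>z. (Inl i, z) \<in> EU \<longrightarrow> z = t \<or> (t, z) \<in> EU\<^sup>+)"
  by (auto simp: ur_att_def children_def descendants_def)

lemma uatt_target: "uatt x t \<Longrightarrow> \<exists>l < n. t = Inr l"
  by (auto simp: ur_att_def children_def edge_rel_def ur_nodes_def elim!: ur_w_nonzero_cases)

lemma uatt_functional:
  assumes "uatt x t" "uatt x t'"
  shows "t = t'"
proof (cases x)
  case (Inl i)
  show ?thesis
  proof (rule ccontr)
    assume "t \<noteq> t'"
    then have "(t, t') \<in> EU\<^sup>+" "(t', t) \<in> EU\<^sup>+" using assms uatt_latent Inl by blast+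
    then have "ur_rank t < ur_rank t'" "ur_rank t' < ur_rank t" by (simp_all add: trancl_rank_less)
    then show False by simp
  qed
qed (use assms uatt_observed in blast)

sublocale attachment NU uatt
  by unfold_locales (rule uatt_functional)

lemma ur_group_eq: "ur_group n m A B = group"
  by (simp add: ur_group_def attach_group_def fun_eq_iff)

lemma ur_key_inj: "inj_on (ur_key m) NU"
  by (auto simp: inj_on_def ur_key_def ur_nodes_def)

lemma key_le_observed_group:
  assumes "u \<in> group (Inr l)"
  shows "ur_key m u \<le> m + l"
proof (cases u)
  case (Inr l')
  then have "l' = l" using assms uatt_observed by (auto simp: mem_group_iff)
  then show ?thesis using Inr by (simp add: ur_key_def)
qed (use assms in \<open>auto simp: mem_group_iff ur_key_def\<close>)

lemma unattached_group: "\<nexists>t. uatt x t \<Longrightarrow> group x \<subseteq> {x}"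
  by (auto simp: mem_group_iff)

end

locale ur_equivalent = M: ur_model n m A B + M': ur_model n m A' B' for n m A B A' B' +
  fixes \<pi> :: "nat \<Rightarrow> nat"
  assumes latent_bij: "bij_betw \<pi> {..<m} {..<m}"
    and same_aog: "ur_aog n m A' B' = (\<lambda>G. ur_relabel \<pi> ` G) ` ur_aog n m A B"
begin

lemma relabel_att:
  assumes att: "M.uatt (Inl i) (Inr l)"
  shows "M'.uatt (Inl (\<pi> i)) (Inr l)"
proof -
  have i: "i < m" and l: "l < n" using att by (auto simp: ur_att_def children_def edge_rel_def)
  have in_group: "Inl i \<in> M.group (Inr l)" "Inr l \<in> M.group (Inr l)"
    using att i l M.mem_group_self by (auto simp: M.mem_group_iff ur_att_def)
  have "ur_relabel \<pi> ` M.group (Inr l) \<in> ur_aog n m A' B'"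
    using same_aog l by (auto simp: ur_aog_def M.ur_group_eq)
  then obtain v where v: "v \<in> M'.NU" "ur_relabel \<pi> ` M.group (Inr l) = M'.group v"
    by (auto simp: ur_aog_def M'.ur_group_eq)
  then have "M'.group (Inr l) = M'.group v"
    using in_group(2) M'.group_eq by (metis image_eqI ur_relabel_simps(2))
  moreover have "Inl (\<pi> i) \<in> M'.group v" using in_group(1) v(2) by (metis image_eqI ur_relabel_simps(1))
  ultimately have "Inl (\<pi> i) \<in> M'.group (Inr l)" by simp
  then obtain t where "M'.uatt (Inl (\<pi> i)) t" "M'.uatt (Inr l) t" by (auto simp: M'.mem_group_iff)
  then show ?thesis using M'.uatt_observed by blast
qed

lemma key_less:
  assumes x: "x \<in> M.NU" and y: "y \<in> M.NU"
    and edge: "ur_w A' B' (ur_relabel \<pi> y) (ur_relabel \<pi> x) \<noteq> 0"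
    and ne: "M.group x \<noteq> M.group y"
  shows "Max (ur_key m ` M.group x) < Max (ur_key m ` M.group y)"
proof -
  obtain j where yj: "y = Inr j"
    using edge by (cases y) (auto simp: ur_relabel_def elim: ur_w_nonzero_cases)
  have bound: "ur_key m u < m + j" if u: "u \<in> M.group x" for u
  proof (cases x)
    case (Inr l)
    have "l < j" using edge yj Inr by (auto elim: ur_w_nonzero_cases dest: M'.lower_triangular)
    then show ?thesis using M.key_le_observed_group u Inr by fastforce
  next
    case (Inl i)
    show ?thesis
    proof (cases "\<exists>t. M.uatt x t")
      case True
      then obtain l where att: "M.uatt (Inl i) (Inr l)" "l < n" using Inl M.uatt_target by blast
      then have "x \<in> M.group (Inr l)"
        using x Inl M.uatt_observed by (auto simp: M.mem_group_iff ur_att_def)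
      then have gx: "M.group x = M.group (Inr l)" using M.group_eq att(2) by simp
      have "(Inl (\<pi> i), Inr j) \<in> M'.EU"
        using edge yj Inl x y latent_bij
        by (auto simp: edge_rel_def ur_w_def ur_nodes_def bij_betw_def elim: ur_w_nonzero_cases)
      then have "Inr j = Inr l \<or> (Inr l, Inr j) \<in> M'.EU\<^sup>+"
        using M'.uatt_latent[OF relabel_att[OF att(1)]] by blast
      moreover have "j \<noteq> l" using gx ne yj by auto
      ultimately have "l < j" using M'.trancl_rank_less by (fastforce simp: ur_rank_def)
      then show ?thesis using M.key_le_observed_group u gx by fastforce
    next
      case False
      then have "u = Inl i" using M.unattached_group u Inl by blast
      then show ?thesis using Inl x by (simp add: ur_key_def)
    qed
  qed
  have fin: "finite (M.group v)" for v
    by (rule finite_subset[OF M.group_subset]) (simp add: ur_nodes_def)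
  have "Max (ur_key m ` M.group x) < m + j"
    using fin M.mem_group_self[OF x] bound by (subst Max_less_iff) auto
  also have "m + j = ur_key m y" using yj by (simp add: ur_key_def)
  also have "\<dots> \<le> Max (ur_key m ` M.group y)" using fin M.mem_group_self[OF y] by simp
  finally show ?thesis .
qed

end

lemma ur_groups_ordered:
  assumes model: "sem_ur n m A B"
  shows "\<exists>R. linear_order_on (ur_aog n m A B) R \<and>
    (\<forall>(A', B', \<pi>) \<in> ur_aog_class n m A B. \<forall>x \<in> ur_nodes n m. \<forall>y \<in> ur_nodes n m.
       ur_w A' B' (ur_relabel \<pi> y) (ur_relabel \<pi> x) \<noteq> 0 \<and>
       ur_group n m A B x \<noteq> ur_group n m A B y \<longrightarrow>
       (ur_group n m A B x, ur_group n m A B y) \<in> R)"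
proof -
  interpret M: ur_model n m A B by (rule ur_model.intro[OF model])
  define key where "key G = Max (ur_key m ` G)" for G
  have aog: "ur_aog n m A B = M.group ` M.NU" by (simp add: ur_aog_def M.ur_group_eq)
  have "inj_on key (ur_aog n m A B)"
    unfolding aog key_def using M.ur_key_inj
    by (intro M.inj_on_selected_key) (simp_all add: ur_nodes_def)
  moreover have "key (ur_group n m A B x) < key (ur_group n m A B y)"
    if cl: "(A', B', \<pi>) \<in> ur_aog_class n m A B" and x: "x \<in> M.NU" and y: "y \<in> M.NU"
      and edge: "ur_w A' B' (ur_relabel \<pi> y) (ur_relabel \<pi> x) \<noteq> 0"
      and ne: "ur_group n m A B x \<noteq> ur_group n m A B y" for A' B' \<pi> x y
  proof -
    have "ur_equivalent n m A B A' B' \<pi>"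
      using cl model by (simp add: ur_aog_class_def ur_equivalent_def ur_equivalent_axioms_def ur_model_def)
    then interpret ur_equivalent n m A B A' B' \<pi> .
    show ?thesis using key_less[OF x y edge] ne by (simp add: key_def M.ur_group_eq)
  qed
  ultimately show ?thesis
    by (intro exI[of _ "{(G, H). G \<in> ur_aog n m A B \<and> H \<in> ur_aog n m A B \<and> key G \<le> key H}"])
      (fastforce simp: linear_order_on_key ur_aog_def)
qed

theorem proposition1:
  shows "(\<forall>p c U. sem_me p c U \<and> me_faithful_a p c \<longrightarrow>
            (\<exists>R. linear_order_on (me_aog p c U) R \<and>
               (\<forall>(c', U') \<in> me_aog_class p c U. \<forall>i \<in> me_nodes p. \<forall>j \<in> me_nodes p.
                  c' i j \<noteq> 0 \<and> me_group p c U j \<noteq> me_group p c U i \<longrightarrow>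
                  (me_group p c U j, me_group p c U i) \<in> R)))
       \<and> (\<forall>n m A B. sem_ur n m A B \<and> ur_faithful_a n m A B \<longrightarrow>
            (\<exists>R. linear_order_on (ur_aog n m A B) R \<and>
               (\<forall>(A', B', \<pi>) \<in> ur_aog_class n m A B. \<forall>x \<in> ur_nodes n m. \<forall>y \<in> ur_nodes n m.
                  ur_w A' B' (ur_relabel \<pi> y) (ur_relabel \<pi> x) \<noteq> 0 \<and>
                  ur_group n m A B x \<noteq> ur_group n m A B y \<longrightarrow>
                  (ur_group n m A B x, ur_group n m A B y) \<in> R)))"
  by (intro conjI allI impI; elim conjE; rule me_groups_ordered ur_groups_ordered; assumption)

end
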